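(* Let $B\in\mathbb R^{n\times n}$ be symmetric positive semidefinite, let $T\ge1$ be an integer and $\alpha>0$ with $\alpha<1/\rho(B)$ (so that $I-\alpha B$ is positive definite). Define $C=\sum_{t=0}^{T-1}(I-\alpha B)^t$. Then $C$ is invertible and symmetric; and with $M=C^{-1}(I-\alpha B)^T$ and $N=\frac{1}{\alpha}(C^{-1}-M)$, the matrix $N$ is symmetric positive semidefinite and $M$ is symmetric positive definite with \[\frac{(1-\alpha\rho(B))^T}{\sum_{t=0}^{T-1}(1-\alpha\rho(B))^t}I\preceq M\preceq\frac{1}{T}I.\]
   Context: $\rho(B)$ denotes the largest eigenvalue of $B$ (if $B=0$, $1/\rho(B)=\infty$). For symmetric matrices, $S_1\preceq S_2$ means $S_2-S_1$ is positive semidefinite. *)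

theory Defs
  imports "HOL-Analysis.Analysis"
begin

primrec matpow :: "real^'n^'n \<Rightarrow> nat \<Rightarrow> real^'n^'n" where
  "matpow A 0 = mat 1"
| "matpow A (Suc k) = A ** matpow A k"

definition symmetric_mat :: "real^'n^'n \<Rightarrow> bool" where
  "symmetric_mat A \<longleftrightarrow> transpose A = A"

definition psd :: "real^'n^'n \<Rightarrow> bool" where
  "psd A \<longleftrightarrow> symmetric_mat A \<and> (\<forall>x. 0 \<le> x \<bullet> (A *v x))"

definition pd :: "real^'n^'n \<Rightarrow> bool" where
  "pd A \<longleftrightarrow> symmetric_mat A \<and> (\<forall>x. x \<noteq> 0 \<longrightarrow> 0 < x \<bullet> (A *v x))"

definition loewner_le :: "real^'n^'n \<Rightarrow> real^'n^'n \<Rightarrow> bool" where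
  "loewner_le S1 S2 \<longleftrightarrow> psd (S2 - S1)"

definition is_eigenvalue :: "real^'n^'n \<Rightarrow> real \<Rightarrow> bool" where
  "is_eigenvalue A l \<longleftrightarrow> (\<exists>v. v \<noteq> 0 \<and> A *v v = l *\<^sub>R v)"

definition rho :: "real^'n^'n \<Rightarrow> real" where
  "rho A = Max {l. is_eigenvalue A l}"

end

(*
  Everything in sight is a function of the symmetric matrix A = I - \<alpha>B: with s(l) = \<Sum>t<T. l^t
  one has C = s(A), M = A^T / s(A) and N = (1 - A^T) / (\<alpha> s(A)).  The eigenvalues of A lie in
  [1 - \<alpha> \<rho>(B), 1], a subinterval of (0, 1], and the claims reduce to scalar inequalities for
  l^T / s(l) on that interval: it is positive, increasing in l, and at most 1/T.  To transfer scalar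
  bounds to matrices we use a small spectral calculus.  Q "is q(A)" if Q v = q(l) v for every
  eigenpair (l, v) of A; since the eigenvectors of a symmetric matrix span the space, such a Q is
  symmetric and commutes with A, and the minimum of its quadratic form on the unit sphere is an
  eigenvalue of Q whose eigenspace is A-invariant, hence equal to q(l) for an eigenvalue l of A.
*)

theory Submission
  imports Defs
begin

lemma linear_coeff_zero_if_quadratic_nonneg:
  fixes b c :: real
  assumes "\<And>t. 0 \<le> b * t + c * t\<^sup>2"
  shows "b = 0"
proof -
  define k where "k = \<bar>c\<bar> + 1"
  have k: "k > 0" by (simp add: k_def add_pos_nonneg)
  have "0 \<le> b * (- b / k) + c * (b / k)\<^sup>2" using assms[of "- b / k"] by simp
  also have "\<dots> \<le> b * (- b / k) + \<bar>c\<bar> * (b / k)\<^sup>2"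
    by (simp add: mult_right_mono)
  also have "\<dots> = (b / k)\<^sup>2 * (\<bar>c\<bar> - k)"
    using k by (simp add: power2_eq_square field_simps)
  also have "\<dots> = - (b / k)\<^sup>2"
    by (simp add: k_def)
  finally show ?thesis using k by simp
qed

lemma symmetric_mat_inner:
  assumes "symmetric_mat A"
  shows "x \<bullet> (A *v y) = (A *v x) \<bullet> y"
  by (metis assms dot_lmul_matrix symmetric_mat_def transpose_matrix_vector)

lemma symmetric_mat_diff:
  "symmetric_mat A \<Longrightarrow> symmetric_mat B \<Longrightarrow> symmetric_mat (A - B)"
  by (simp add: symmetric_mat_def transpose_def vec_eq_iff)

lemma symmetric_mat_id: "symmetric_mat (mat 1)"
  by (simp add: symmetric_mat_def)

lemma symmetric_mat_scaleR: "symmetric_mat A \<Longrightarrow> symmetric_mat (c *\<^sub>R A)"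
  by (simp add: symmetric_mat_def transpose_scalar)

lemma nonneg_form_zero_imp_kernel:
  fixes P :: "real^'n^'n"
  assumes "symmetric_mat P" and "subspace V" and invariant: "\<And>x. x \<in> V \<Longrightarrow> P *v x \<in> V"
    and nonneg: "\<And>x. x \<in> V \<Longrightarrow> 0 \<le> x \<bullet> (P *v x)"
    and "u \<in> V" and "u \<bullet> (P *v u) = 0"
  shows "P *v u = 0"
proof -
  define y where "y = P *v u"
  have "0 \<le> 2 * (y \<bullet> y) * t + (y \<bullet> (P *v y)) * t\<^sup>2" for t
  proof -
    have "u + t *\<^sub>R y \<in> V"
      using assms invariant by (simp add: y_def subspace_add subspace_scale)
    then have "0 \<le> (u + t *\<^sub>R y) \<bullet> (P *v (u + t *\<^sub>R y))" by (rule nonneg)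
    also have "\<dots> = u \<bullet> (P *v u) + t * (u \<bullet> (P *v y)) + t * (y \<bullet> (P *v u)) + t\<^sup>2 * (y \<bullet> (P *v y))"
      by (simp add: matrix_vector_right_distrib matrix_vector_mult_scaleR inner_add_left
          inner_add_right power2_eq_square algebra_simps)
    also have "\<dots> = 2 * (y \<bullet> y) * t + (y \<bullet> (P *v y)) * t\<^sup>2"
      using assms(6) symmetric_mat_inner[OF assms(1), of u y] by (simp add: y_def)
    finally show ?thesis .
  qed
  then have "2 * (y \<bullet> y) = 0" by (rule linear_coeff_zero_if_quadratic_nonneg)
  then show ?thesis by (simp add: y_def)
qed

lemma quadratic_form_attains_min:
  fixes A :: "real^'n^'n"
  assumes "subspace V" and "V \<noteq> {0}"
  obtains u where "u \<in> V" "norm u = 1" "\<And>x. x \<in> V \<Longrightarrow> (u \<bullet> (A *v u)) * (x \<bullet> x) \<le> x \<bullet> (A *v x)"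
proof -
  let ?S = "V \<inter> sphere 0 1"
  obtain w where w: "w \<in> V" "w \<noteq> 0" using assms subspace_0 by blast
  have cS: "compact ?S" by (intro closed_Int_compact closed_subspace assms compact_sphere)
  have "w /\<^sub>R norm w \<in> ?S" using w assms by (simp add: subspace_scale)
  then have ne: "?S \<noteq> {}" by blast
  have ct: "continuous_on ?S (\<lambda>x. x \<bullet> (A *v x))"
    by (intro continuous_on_inner continuous_on_id
        matrix_vector_mult_linear_continuous_on[unfolded comp_def])
  obtain u where u: "u \<in> ?S" and umin: "\<And>y. y \<in> ?S \<Longrightarrow> u \<bullet> (A *v u) \<le> y \<bullet> (A *v y)"
    using continuous_attains_inf[OF cS ne ct] by blast
  show ?thesis
  proof (rule that)
    show "u \<in> V" "norm u = 1" using u by auto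
  next
    fix x assume "x \<in> V"
    show "(u \<bullet> (A *v u)) * (x \<bullet> x) \<le> x \<bullet> (A *v x)"
    proof (cases "x = 0")
      case False
      have "x /\<^sub>R norm x \<in> ?S" using \<open>x \<in> V\<close> False assms by (simp add: subspace_scale)
      then have "u \<bullet> (A *v u) \<le> (x /\<^sub>R norm x) \<bullet> (A *v (x /\<^sub>R norm x))" by (rule umin)
      also have "\<dots> = (x \<bullet> (A *v x)) / (norm x)\<^sup>2"
        by (simp add: matrix_vector_mult_scaleR power2_eq_square divide_inverse)
      finally show ?thesis using False by (simp add: pos_le_divide_eq power2_norm_eq_inner)
    qed simp
  qed
qed

lemma symmetric_mat_min_eigenvector:
  fixes A :: "real^'n^'n"
  assumes "symmetric_mat A" and "subspace V" and "\<And>x. x \<in> V \<Longrightarrow> A *v x \<in> V" and "V \<noteq> {0}"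
  obtains u m where "u \<in> V" "u \<noteq> 0" "A *v u = m *\<^sub>R u"
    "\<And>x. x \<in> V \<Longrightarrow> m * (x \<bullet> x) \<le> x \<bullet> (A *v x)"
proof -
  obtain u where u: "u \<in> V" "norm u = 1"
    and umin: "\<And>x. x \<in> V \<Longrightarrow> (u \<bullet> (A *v u)) * (x \<bullet> x) \<le> x \<bullet> (A *v x)"
    using quadratic_form_attains_min[OF assms(2,4)] by blast
  define m where "m = u \<bullet> (A *v u)"
  define P where "P = A - m *\<^sub>R mat 1"
  have Px: "P *v x = A *v x - m *\<^sub>R x" for x
    by (simp add: P_def algebra_simps scaleR_matrix_vector_assoc[symmetric])
  have "P *v u = 0"
  proof (rule nonneg_form_zero_imp_kernel[OF _ assms(2) _ _ u(1)])
    show "symmetric_mat P"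
      using assms(1) by (simp add: P_def symmetric_mat_diff symmetric_mat_scaleR symmetric_mat_id)
    show "P *v x \<in> V" if "x \<in> V" for x
      using that assms(2,3) by (simp add: Px subspace_diff subspace_scale)
    show "0 \<le> x \<bullet> (P *v x)" if "x \<in> V" for x
      using umin[OF that] by (simp add: Px m_def inner_diff_right)
    show "u \<bullet> (P *v u) = 0" using u(2) by (simp add: Px m_def inner_diff_right norm_eq_1)
  qed
  show ?thesis
  proof (rule that[OF u(1)])
    show "u \<noteq> 0" using u(2) by auto
    show "A *v u = m *\<^sub>R u" using \<open>P *v u = 0\<close> by (simp add: Px)
  qed (use umin m_def in auto)
qed

lemma symmetric_mat_invariant_subspace_eigenvector:
  fixes A :: "real^'n^'n"
  assumes "symmetric_mat A" and "subspace V" and "\<And>x. x \<in> V \<Longrightarrow> A *v x \<in> V" and "V \<noteq> {0}"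
  obtains u l where "u \<in> V" "u \<noteq> 0" "A *v u = l *\<^sub>R u"
  using assms by (rule symmetric_mat_min_eigenvector)

lemma symmetric_mat_eigenvectors_orthogonal:
  assumes "symmetric_mat A" and "A *v u = l *\<^sub>R u" and "A *v v = m *\<^sub>R v" and "l \<noteq> m"
  shows "u \<bullet> v = 0"
proof -
  have "l * (u \<bullet> v) = (A *v u) \<bullet> v" using assms(2) by simp
  also have "\<dots> = u \<bullet> (A *v v)" by (simp add: symmetric_mat_inner[OF assms(1)])
  also have "\<dots> = m * (u \<bullet> v)" using assms(3) by simp
  finally show ?thesis using assms(4) by simp
qed

lemma finite_eigenvalues_symmetric_mat:
  assumes "symmetric_mat A"
  shows "finite {l. is_eigenvalue A l}"
proof -
  let ?E = "{l. is_eigenvalue A l}"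
  define vec_of where "vec_of l = (SOME v. v \<noteq> 0 \<and> A *v v = l *\<^sub>R v)" for l
  have vec_of: "vec_of l \<noteq> 0" "A *v vec_of l = l *\<^sub>R vec_of l" if "l \<in> ?E" for l
    using someI_ex[of "\<lambda>v. v \<noteq> 0 \<and> A *v v = l *\<^sub>R v"] that
    by (auto simp: vec_of_def is_eigenvalue_def)
  have "inj_on vec_of ?E"
  proof (rule inj_onI)
    fix l m assume "l \<in> ?E" "m \<in> ?E" "vec_of l = vec_of m"
    then have "l *\<^sub>R vec_of l = m *\<^sub>R vec_of l" using vec_of by metis
    then show "l = m" using vec_of \<open>l \<in> ?E\<close> by simp
  qed
  moreover have "pairwise orthogonal (vec_of ` ?E)"
  proof (rule pairwiseI)
    fix x y assume "x \<in> vec_of ` ?E" "y \<in> vec_of ` ?E" "x \<noteq> y"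
    then obtain l m where "l \<in> ?E" "m \<in> ?E" "x = vec_of l" "y = vec_of m" "l \<noteq> m" by blast
    then show "orthogonal x y"
      using symmetric_mat_eigenvectors_orthogonal[OF assms] vec_of by (simp add: orthogonal_def)
  qed
  then have "finite (vec_of ` ?E)" by (rule pairwise_orthogonal_imp_finite)
  ultimately show ?thesis using finite_imageD by blast
qed

lemma span_eigenvectors_symmetric_mat:
  assumes "symmetric_mat A"
  shows "span {v. \<exists>l. A *v v = l *\<^sub>R v} = UNIV"
proof -
  define E where "E = {v. \<exists>l. A *v v = l *\<^sub>R v}"
  define V where "V = {z. \<forall>v\<in>E. orthogonal v z}"
  have V: "subspace V" unfolding V_def by (rule subspace_orthogonal_to_vectors)
  have invariant: "A *v z \<in> V" if "z \<in> V" for z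
  proof -
    have "orthogonal v (A *v z)" if "A *v v = l *\<^sub>R v" for v l
    proof -
      have "v \<bullet> (A *v z) = l * (v \<bullet> z)" using that by (simp add: symmetric_mat_inner[OF assms])
      moreover have "v \<in> E" using that by (auto simp: E_def)
      ultimately show ?thesis using \<open>z \<in> V\<close> by (simp add: V_def orthogonal_def)
    qed
    then show ?thesis by (auto simp: V_def E_def)
  qed
  have "V = {0}"
  proof (rule ccontr)
    assume "V \<noteq> {0}"
    with assms V invariant obtain u l where "u \<in> V" "u \<noteq> 0" "A *v u = l *\<^sub>R u"
      by (rule symmetric_mat_invariant_subspace_eigenvector)
    then show False by (auto simp: V_def E_def orthogonal_self)
  qed
  have "x \<in> span E" for x
  proof -
    obtain y z where "y \<in> span E" and z: "\<And>w. w \<in> span E \<Longrightarrow> orthogonal z w" and "x = y + z"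
      using orthogonal_subspace_decomp_exists by blast
    have "z \<in> V" using z span_base orthogonal_commute unfolding V_def by blast
    then show ?thesis using \<open>V = {0}\<close> \<open>y \<in> span E\<close> \<open>x = y + z\<close> by simp
  qed
  then show ?thesis by (auto simp: E_def)
qed

lemma matrix_eq_on_eigenvectors:
  fixes P Q :: "real^'n^'n"
  assumes "symmetric_mat A" and "\<And>v l. A *v v = l *\<^sub>R v \<Longrightarrow> P *v v = Q *v v"
  shows "P = Q"
  unfolding matrix_eq
  using linear_eq_on_span[OF matrix_vector_mul_linear matrix_vector_mul_linear,
      of "{v. \<exists>l. A *v v = l *\<^sub>R v}"]
    span_eigenvectors_symmetric_mat[OF assms(1)] assms(2) by blast

(* Q = q(A) in the sense of the functional calculus; only the values of q on the
   eigenvalues of A matter. *)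
definition spectral_fun :: "real^'n^'n \<Rightarrow> (real \<Rightarrow> real) \<Rightarrow> real^'n^'n \<Rightarrow> bool" where
  "spectral_fun A q Q \<longleftrightarrow> (\<forall>v l. A *v v = l *\<^sub>R v \<longrightarrow> Q *v v = q l *\<^sub>R v)"

lemma spectral_funI:
  "(\<And>v l. A *v v = l *\<^sub>R v \<Longrightarrow> Q *v v = q l *\<^sub>R v) \<Longrightarrow> spectral_fun A q Q"
  by (simp add: spectral_fun_def)

lemma spectral_funD: "spectral_fun A q Q \<Longrightarrow> A *v v = l *\<^sub>R v \<Longrightarrow> Q *v v = q l *\<^sub>R v"
  by (simp add: spectral_fun_def)

lemma spectral_fun_self: "spectral_fun A (\<lambda>l. l) A"
  by (simp add: spectral_fun_def)

lemma spectral_fun_scalar: "spectral_fun A (\<lambda>_. c) (c *\<^sub>R mat 1)"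
  by (simp add: spectral_fun_def scaleR_matrix_vector_assoc[symmetric])

lemma spectral_fun_zero: "spectral_fun A (\<lambda>_. 0) 0"
  by (simp add: spectral_fun_def)

lemma spectral_fun_scaleR:
  assumes "spectral_fun A q Q"
  shows "spectral_fun A (\<lambda>l. c * q l) (c *\<^sub>R Q)"
proof (rule spectral_funI)
  fix v l assume eig: "A *v v = l *\<^sub>R v"
  show "(c *\<^sub>R Q) *v v = (c * q l) *\<^sub>R v"
    using spectral_funD[OF assms eig] by (simp add: scaleR_matrix_vector_assoc[symmetric])
qed

lemma spectral_fun_add:
  assumes "spectral_fun A p P" and "spectral_fun A q Q"
  shows "spectral_fun A (\<lambda>l. p l + q l) (P + Q)"
proof (rule spectral_funI)
  fix v l assume eig: "A *v v = l *\<^sub>R v"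
  show "(P + Q) *v v = (p l + q l) *\<^sub>R v"
    using spectral_funD[OF assms(1) eig] spectral_funD[OF assms(2) eig]
    by (simp add: matrix_vector_mult_add_rdistrib scaleR_add_left)
qed

lemma spectral_fun_diff:
  assumes "spectral_fun A p P" and "spectral_fun A q Q"
  shows "spectral_fun A (\<lambda>l. p l - q l) (P - Q)"
proof (rule spectral_funI)
  fix v l assume eig: "A *v v = l *\<^sub>R v"
  show "(P - Q) *v v = (p l - q l) *\<^sub>R v"
    using spectral_funD[OF assms(1) eig] spectral_funD[OF assms(2) eig]
    by (simp add: matrix_vector_mult_diff_rdistrib scaleR_diff_left)
qed

lemma spectral_fun_mult:
  assumes "spectral_fun A p P" and "spectral_fun A q Q"
  shows "spectral_fun A (\<lambda>l. p l * q l) (P ** Q)"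
proof (rule spectral_funI)
  fix v l assume eig: "A *v v = l *\<^sub>R v"
  show "(P ** Q) *v v = (p l * q l) *\<^sub>R v"
    using spectral_funD[OF assms(1) eig] spectral_funD[OF assms(2) eig]
    by (simp add: matrix_vector_mul_assoc[symmetric] matrix_vector_mult_scaleR)
qed

lemma spectral_fun_sum:
  assumes "\<And>i. i \<in> I \<Longrightarrow> spectral_fun A (q i) (Q i)"
  shows "spectral_fun A (\<lambda>l. \<Sum>i\<in>I. q i l) (\<Sum>i\<in>I. Q i)"
  using assms
  by (induction I rule: infinite_finite_induct) (simp_all add: spectral_fun_zero spectral_fun_add)

lemma spectral_fun_matpow: "spectral_fun A (\<lambda>l. l ^ k) (matpow A k)"
  by (induction k)
    (simp_all add: spectral_fun_scalar[of A 1, simplified] spectral_fun_mult[OF spectral_fun_self])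

lemma matrix_inv_mult:
  assumes "invertible (A :: 'a::semiring_1^'n^'n)"
  shows "A ** matrix_inv A = mat 1" and "matrix_inv A ** A = mat 1"
  using someI_ex[OF assms[unfolded invertible_def]] by (simp_all add: matrix_inv_def)

lemma spectral_fun_matrix_inv:
  assumes "invertible Q" and "spectral_fun A q Q"
  shows "spectral_fun A (\<lambda>l. inverse (q l)) (matrix_inv Q)"
proof (rule spectral_funI)
  fix v l assume eig: "A *v v = l *\<^sub>R v"
  have "matrix_inv Q *v (Q *v v) = q l *\<^sub>R (matrix_inv Q *v v)"
    using spectral_funD[OF assms(2) eig] by (simp add: matrix_vector_mult_scaleR)
  then have v: "v = q l *\<^sub>R (matrix_inv Q *v v)"
    by (simp add: matrix_vector_mul_assoc matrix_inv_mult[OF assms(1)])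
  show "matrix_inv Q *v v = inverse (q l) *\<^sub>R v"
  proof (cases "q l = 0")
    case False
    then show ?thesis by (subst (2) v) simp
  qed (use v in simp)
qed

lemma spectral_fun_commute:
  assumes "symmetric_mat A" and "spectral_fun A p P" and "spectral_fun A q Q"
  shows "P ** Q = Q ** P"
proof (rule matrix_eq_on_eigenvectors[OF assms(1)])
  fix v l assume eig: "A *v v = l *\<^sub>R v"
  show "(P ** Q) *v v = (Q ** P) *v v"
    using spectral_funD[OF spectral_fun_mult[OF assms(2,3)] eig]
      spectral_funD[OF spectral_fun_mult[OF assms(3,2)] eig] by (simp add: mult.commute)
qed

lemma symmetric_mat_spectral_fun:
  assumes "symmetric_mat A" and "spectral_fun A q Q"
  shows "symmetric_mat Q"
  unfolding symmetric_mat_def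
proof (rule matrix_eq_on_eigenvectors[OF assms(1)])
  fix v l assume eig: "A *v v = l *\<^sub>R v"
  define w where "w = transpose Q *v v - q l *\<^sub>R v"
  have orth: "orthogonal w u" if "A *v u = m *\<^sub>R u" for u m
  proof -
    have "u \<bullet> (transpose Q *v v) = v \<bullet> (Q *v u)"
      by (metis dot_lmul_matrix inner_commute transpose_matrix_vector)
    then have "u \<bullet> (transpose Q *v v) = q m * (u \<bullet> v)"
      using spectral_funD[OF assms(2) that] by (simp add: inner_commute)
    moreover have "m \<noteq> l \<Longrightarrow> u \<bullet> v = 0"
      by (rule symmetric_mat_eigenvectors_orthogonal[OF assms(1) that eig])
    ultimately show ?thesis
      by (cases "m = l") (auto simp: w_def orthogonal_def inner_diff_left inner_diff_right inner_commute)
  qed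
  have "w \<in> span {u. \<exists>m. A *v u = m *\<^sub>R u}"
    using span_eigenvectors_symmetric_mat[OF assms(1)] by simp
  then have "orthogonal w w" by (rule orthogonal_to_span) (use orth in blast)
  then show "transpose Q *v v = Q *v v"
    using spectral_funD[OF assms(2) eig] by (simp add: orthogonal_self w_def)
qed

lemma spectral_fun_eigenvalue:
  assumes "symmetric_mat A" and "spectral_fun A q Q" and "Q *v w = m *\<^sub>R w" and "w \<noteq> 0"
  obtains l where "is_eigenvalue A l" and "m = q l"
proof -
  define W where "W = {x. Q *v x = m *\<^sub>R x}"
  have W: "subspace W"
    by (simp add: W_def subspace_def matrix_vector_right_distrib matrix_vector_mult_scaleR
        scaleR_add_right)
  have invariant: "A *v x \<in> W" if "x \<in> W" for x
  proof -
    have "Q *v (A *v x) = A *v (Q *v x)"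
      using spectral_fun_commute[OF assms(1) spectral_fun_self assms(2)]
      by (simp add: matrix_vector_mul_assoc)
    then show ?thesis using that by (simp add: W_def matrix_vector_mult_scaleR)
  qed
  have "W \<noteq> {0}" using assms(3,4) by (auto simp: W_def)
  with assms(1) W invariant obtain u l where u: "u \<in> W" "u \<noteq> 0" "A *v u = l *\<^sub>R u"
    by (rule symmetric_mat_invariant_subspace_eigenvector)
  have "m *\<^sub>R u = q l *\<^sub>R u"
    using u(1) spectral_funD[OF assms(2) u(3)] by (auto simp: W_def)
  then have "m = q l" using u(2) by simp
  moreover have "is_eigenvalue A l" using u(2,3) unfolding is_eigenvalue_def by blast
  ultimately show ?thesis using that by simp
qed

lemma spectral_fun_form_lower_bound:
  fixes A Q :: "real^'n^'n"
  assumes "symmetric_mat A" and "spectral_fun A q Q"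
  obtains l where "is_eigenvalue A l" and "\<And>x. q l * (x \<bullet> x) \<le> x \<bullet> (Q *v x)"
proof -
  have "vec 1 \<noteq> (0 :: real^'n)" by (simp add: vec_eq_iff)
  then have nonzero: "UNIV \<noteq> {0 :: real^'n}" by auto
  have invariant: "\<And>x. x \<in> UNIV \<Longrightarrow> Q *v x \<in> UNIV" by simp
  show ?thesis
  proof (rule symmetric_mat_min_eigenvector
      [OF symmetric_mat_spectral_fun[OF assms] subspace_UNIV invariant nonzero])
    fix u m assume "u \<noteq> 0" "Q *v u = m *\<^sub>R u"
      and min: "\<And>x. x \<in> UNIV \<Longrightarrow> m * (x \<bullet> x) \<le> x \<bullet> (Q *v x)"
    obtain l where "is_eigenvalue A l" "m = q l"
      using assms \<open>Q *v u = m *\<^sub>R u\<close> \<open>u \<noteq> 0\<close> by (rule spectral_fun_eigenvalue)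
    with min show ?thesis using that by simp
  qed
qed

lemma psd_spectral_fun:
  assumes "symmetric_mat A" and "spectral_fun A q Q" and "\<And>l. is_eigenvalue A l \<Longrightarrow> 0 \<le> q l"
  shows "psd Q"
proof -
  obtain l where "is_eigenvalue A l" and bound: "\<And>x. q l * (x \<bullet> x) \<le> x \<bullet> (Q *v x)"
    using spectral_fun_form_lower_bound[OF assms(1,2)] by blast
  have "0 \<le> x \<bullet> (Q *v x)" for x
  proof -
    have "0 \<le> q l * (x \<bullet> x)" using assms(3)[OF \<open>is_eigenvalue A l\<close>] by simp
    then show ?thesis using bound[of x] by linarith
  qed
  then show ?thesis using symmetric_mat_spectral_fun[OF assms(1,2)] by (simp add: psd_def)
qed

lemma pd_spectral_fun:
  assumes "symmetric_mat A" and "spectral_fun A q Q" and "\<And>l. is_eigenvalue A l \<Longrightarrow> 0 < q l"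
  shows "pd Q"
proof -
  obtain l where "is_eigenvalue A l" and bound: "\<And>x. q l * (x \<bullet> x) \<le> x \<bullet> (Q *v x)"
    using spectral_fun_form_lower_bound[OF assms(1,2)] by blast
  have "0 < x \<bullet> (Q *v x)" if "x \<noteq> 0" for x
  proof -
    have "0 < q l * (x \<bullet> x)" using assms(3)[OF \<open>is_eigenvalue A l\<close>] that by simp
    then show ?thesis using bound[of x] by linarith
  qed
  then show ?thesis using symmetric_mat_spectral_fun[OF assms(1,2)] by (simp add: pd_def)
qed

lemma loewner_le_spectral_fun:
  assumes "symmetric_mat A" and "spectral_fun A p P" and "spectral_fun A q Q"
    and "\<And>l. is_eigenvalue A l \<Longrightarrow> p l \<le> q l"
  shows "loewner_le P Q"
  unfolding loewner_le_def
  by (rule psd_spectral_fun[OF assms(1) spectral_fun_diff[OF assms(3,2)]]) (simp add: assms(4))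

lemma invertible_if_pd:
  assumes "pd A"
  shows "invertible A"
  unfolding invertible_left_inverse matrix_left_invertible_ker
proof (intro allI impI)
  fix x assume "A *v x = 0"
  then show "x = 0" using assms by (auto simp: pd_def)
qed

lemma psd_eigenvalue_nonneg:
  assumes "psd B" and "is_eigenvalue B l"
  shows "0 \<le> l"
proof -
  obtain v where "v \<noteq> 0" "B *v v = l *\<^sub>R v" using assms(2) by (auto simp: is_eigenvalue_def)
  moreover have "0 \<le> v \<bullet> (B *v v)" using assms(1) by (simp add: psd_def)
  moreover have "0 < v \<bullet> v" using \<open>v \<noteq> 0\<close> by simp
  ultimately show ?thesis by (simp add: zero_le_mult_iff)
qed

lemma eigenvalue_le_rho:
  assumes "symmetric_mat B" and "is_eigenvalue B l"
  shows "l \<le> rho B"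
  unfolding rho_def using finite_eigenvalues_symmetric_mat[OF assms(1)] assms(2) by simp

lemma eigenvalue_id_minus_scaleR_bounds:
  assumes "psd B" and "0 < \<alpha>" and "is_eigenvalue (mat 1 - \<alpha> *\<^sub>R B) l"
  shows "1 - \<alpha> * rho B \<le> l" and "l \<le> 1"
proof -
  obtain v where "v \<noteq> 0" and "v - \<alpha> *\<^sub>R (B *v v) = l *\<^sub>R v"
    using assms(3) by (auto simp: is_eigenvalue_def matrix_vector_mult_diff_rdistrib
        scaleR_matrix_vector_assoc[symmetric])
  then have eq: "\<alpha> *\<^sub>R (B *v v) = (1 - l) *\<^sub>R v" by (simp add: algebra_simps)
  have "B *v v = inverse \<alpha> *\<^sub>R (\<alpha> *\<^sub>R (B *v v))" using assms(2) by simp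
  also have "\<dots> = ((1 - l) / \<alpha>) *\<^sub>R v" by (simp add: eq divide_inverse mult.commute)
  finally have "B *v v = ((1 - l) / \<alpha>) *\<^sub>R v" .
  then have "is_eigenvalue B ((1 - l) / \<alpha>)"
    using \<open>v \<noteq> 0\<close> by (auto simp: is_eigenvalue_def)
  then have "0 \<le> (1 - l) / \<alpha>" and "(1 - l) / \<alpha> \<le> rho B"
    using assms(1) psd_eigenvalue_nonneg eigenvalue_le_rho by (auto simp: psd_def)
  then show "1 - \<alpha> * rho B \<le> l" and "l \<le> 1"
    using assms(2) by (simp_all add: field_simps)
qed

lemma one_le_geometric_sum:
  fixes l :: real
  assumes "0 \<le> l" and "1 \<le> T"
  shows "1 \<le> (\<Sum>t<T. l ^ t)"
proof -
  have "l ^ 0 \<le> (\<Sum>t<T. l ^ t)"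
    by (rule member_le_sum) (use assms in auto)
  then show ?thesis by simp
qed

lemma power_div_geometric_sum_le:
  fixes l :: real
  assumes "0 \<le> l" and "l \<le> 1" and "1 \<le> T"
  shows "l ^ T / (\<Sum>t<T. l ^ t) \<le> 1 / real T"
proof -
  have "real T * l ^ T = (\<Sum>t<T. l ^ T)" by simp
  also have "\<dots> \<le> (\<Sum>t<T. l ^ t)"
    by (rule sum_mono) (use assms in \<open>auto intro: power_decreasing\<close>)
  finally show ?thesis
    using assms one_le_geometric_sum[of l T] by (simp add: divide_simps mult.commute)
qed

lemma power_div_geometric_sum_mono:
  fixes l m :: real
  assumes "0 < m" and "m \<le> l" and "1 \<le> T"
  shows "m ^ T / (\<Sum>t<T. m ^ t) \<le> l ^ T / (\<Sum>t<T. l ^ t)"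
proof -
  have "m ^ T * l ^ t \<le> l ^ T * m ^ t" if "t < T" for t
  proof -
    have "m ^ (T - t) * (m ^ t * l ^ t) \<le> l ^ (T - t) * (m ^ t * l ^ t)"
      using assms by (intro mult_right_mono power_mono) auto
    moreover have "m ^ T = m ^ (T - t) * m ^ t" and "l ^ T = l ^ (T - t) * l ^ t"
      using that by (simp_all flip: power_add)
    ultimately show ?thesis by (simp add: mult_ac)
  qed
  then have "m ^ T * (\<Sum>t<T. l ^ t) \<le> l ^ T * (\<Sum>t<T. m ^ t)"
    unfolding sum_distrib_left by (intro sum_mono) simp
  then show ?thesis
    using assms one_le_geometric_sum[of m T] one_le_geometric_sum[of l T]
    by (simp add: divide_simps mult.commute)
qed

theorem lemma3p14:
  fixes B :: "real^'n^'n" and T :: nat and \<alpha> :: real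
  assumes "symmetric_mat B" and "psd B"
    and "T \<ge> 1" and "\<alpha> > 0" and "\<alpha> * rho B < 1"
  defines "C \<equiv> (\<Sum>t<T. matpow (mat 1 - \<alpha> *\<^sub>R B) t)"
  defines "M \<equiv> matrix_inv C ** matpow (mat 1 - \<alpha> *\<^sub>R B) T"
  defines "N \<equiv> (1 / \<alpha>) *\<^sub>R (matrix_inv C - M)"
  shows "invertible C \<and> symmetric_mat C \<and> symmetric_mat N \<and> psd N
         \<and> symmetric_mat M \<and> pd M
         \<and> loewner_le (((1 - \<alpha> * rho B) ^ T / (\<Sum>t<T. (1 - \<alpha> * rho B) ^ t)) *\<^sub>R mat 1) M
         \<and> loewner_le M ((1 / real T) *\<^sub>R mat 1)"
proof -
  define A where "A = mat 1 - \<alpha> *\<^sub>R B"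
  define s where "s l = (\<Sum>t<T. l ^ t)" for l :: real
  have symA: "symmetric_mat A"
    using assms(1) by (simp add: A_def symmetric_mat_diff symmetric_mat_scaleR symmetric_mat_id)
  have eig: "0 < l" "1 - \<alpha> * rho B \<le> l" "l \<le> 1" if "is_eigenvalue A l" for l
    using eigenvalue_id_minus_scaleR_bounds[OF assms(2,4) that[unfolded A_def]] assms(5) by auto
  have ratio: "0 < s l" "0 \<le> (1 - l ^ T) / (\<alpha> * s l)" "0 < l ^ T / s l"
    "l ^ T / s l \<le> 1 / real T"
    "(1 - \<alpha> * rho B) ^ T / (\<Sum>t<T. (1 - \<alpha> * rho B) ^ t) \<le> l ^ T / s l"
    if "is_eigenvalue A l" for l
    using eig[OF that] assms(3-5) one_le_geometric_sum[of l T] power_le_one[of l T]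
      power_div_geometric_sum_le[of l T] power_div_geometric_sum_mono[of "1 - \<alpha> * rho B" l T]
    by (auto simp: s_def)
  have FC: "spectral_fun A s C"
    unfolding C_def A_def[symmetric] s_def by (intro spectral_fun_sum spectral_fun_matpow)
  have invC: "invertible C"
    by (intro invertible_if_pd pd_spectral_fun[OF symA FC]) (simp add: ratio(1))
  have FCi: "spectral_fun A (\<lambda>l. 1 / s l) (matrix_inv C)"
    using spectral_fun_matrix_inv[OF invC FC] by (simp add: inverse_eq_divide)
  have FM: "spectral_fun A (\<lambda>l. l ^ T / s l) M"
    using spectral_fun_mult[OF FCi spectral_fun_matpow] by (simp add: M_def A_def)
  have FN: "spectral_fun A (\<lambda>l. (1 - l ^ T) / (\<alpha> * s l)) N"
    using spectral_fun_scaleR[OF spectral_fun_diff[OF FCi FM], of "1 / \<alpha>"]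
    by (simp add: N_def diff_divide_distrib mult.commute)
  show ?thesis
    by (intro conjI invC symmetric_mat_spectral_fun[OF symA FC]
        symmetric_mat_spectral_fun[OF symA FN] symmetric_mat_spectral_fun[OF symA FM]
        psd_spectral_fun[OF symA FN] pd_spectral_fun[OF symA FM]
        loewner_le_spectral_fun[OF symA spectral_fun_scalar FM]
        loewner_le_spectral_fun[OF symA FM spectral_fun_scalar])
      (simp_all add: ratio)
qed

end
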